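(* Let $n\ge3$ and let $A$ be a set of vertices of $C_n$ with $2\le|A|\le n$. Then the output of $\textsc{Ascending Local Search}(C_n,W,A)$ is a maximizer of $W$ on $C_n$.
   Context: $C_n$ has vertex set $\{0,\dots,n-1\}$ with $i$ adjacent to $i+1\bmod n$. $W(X)=\sum_{\{u,v\}\subseteq X,u\ne v}d(u,v)$ over unordered pairs, $d$ shortest-path distance; $X$ is a maximizer of $W$ if $W(X)=\max\{W(B):|B|=|X|\}$. A perturbation of $X$ in a graph $G$ is $(X\setminus\{u\})\cup\{v\}$ with $u\in X$, $v\in V(G)\setminus X$, $uv\in E(G)$. $\textsc{Ascending Local Search}(G,F,A)$: set $X=A$; list all perturbations of $X$ as $L(0),L(1),\dots$; if $F(L(i))>F(X)$ for some $i$, replace $X$ by $L(j)$ for the least such $j$ and repeat; otherwise return $X$. *)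

theory Defs
  imports Main
begin

text \<open>A graph is given by a vertex set V and a symmetric adjacency relation E.\<close>

inductive walk_len :: "('a \<Rightarrow> 'a \<Rightarrow> bool) \<Rightarrow> nat \<Rightarrow> 'a \<Rightarrow> 'a \<Rightarrow> bool"
  for E where
  wl0: "walk_len E 0 u u"
| wlS: "E u w \<Longrightarrow> walk_len E k w v \<Longrightarrow> walk_len E (Suc k) u v"

definition gdist :: "('a \<Rightarrow> 'a \<Rightarrow> bool) \<Rightarrow> 'a \<Rightarrow> 'a \<Rightarrow> nat" where
  "gdist E u v = (LEAST k. walk_len E k u v)"

definition cycle_V :: "nat \<Rightarrow> nat set" where
  "cycle_V n = {0..<n}"

definition cycle_E :: "nat \<Rightarrow> nat \<Rightarrow> nat \<Rightarrow> bool" where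
  "cycle_E n u v \<longleftrightarrow> u < n \<and> v < n \<and> (v = (u + 1) mod n \<or> u = (v + 1) mod n)"

text \<open>W(X): sum of distances over unordered pairs of distinct vertices of X
  (vertices are naturals, so unordered pairs are indexed by u < v).\<close>
definition Wsum :: "(nat \<Rightarrow> nat \<Rightarrow> bool) \<Rightarrow> nat set \<Rightarrow> nat" where
  "Wsum E X = (\<Sum>(u, v) \<in> {(u, v). u \<in> X \<and> v \<in> X \<and> u < v}. gdist E u v)"

definition is_maximizer :: "'a set \<Rightarrow> ('a set \<Rightarrow> 'b::linorder) \<Rightarrow> 'a set \<Rightarrow> bool" where
  "is_maximizer V F X \<longleftrightarrow> X \<subseteq> V \<and>
     (\<forall>B. B \<subseteq> V \<and> card B = card X \<longrightarrow> F B \<le> F X)"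

definition perturbations :: "'a set \<Rightarrow> ('a \<Rightarrow> 'a \<Rightarrow> bool) \<Rightarrow> 'a set \<Rightarrow> 'a set set" where
  "perturbations V E X =
     {(X - {u}) \<union> {v} | u v. u \<in> X \<and> v \<in> V - X \<and> E u v}"

text \<open>als V E F A Y: some run of Ascending Local Search(G, F, A) returns Y.
  At each step the perturbations of the current X are listed in an arbitrary
  order L (a duplicate-free enumeration); if some L(i) improves F, X is
  replaced by L(j) for the least such j.\<close>
inductive als :: "'a set \<Rightarrow> ('a \<Rightarrow> 'a \<Rightarrow> bool) \<Rightarrow> ('a set \<Rightarrow> 'b::linorder) \<Rightarrow> 'a set \<Rightarrow> 'a set \<Rightarrow> bool"
  for V E F where
  als_stop: "\<not> (\<exists>Y \<in> perturbations V E X. F Y > F X) \<Longrightarrow> als V E F X X"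
| als_step: "distinct L \<Longrightarrow> set L = perturbations V E X \<Longrightarrow>
     (\<exists>i < length L. F (L ! i) > F X) \<Longrightarrow>
     j = (LEAST i. i < length L \<and> F (L ! i) > F X) \<Longrightarrow>
     als V E F (L ! j) Z \<Longrightarrow> als V E F X Z"

end

theory Submission
  imports Defs
begin

text \<open>For every j the two antipodal edges after j and after j + n div 2 cut the cycle into two
  arcs of n div 2 vertices each (plus one vertex on neither side when n is odd), and
  2 d(u, v) equals the number of these n cuts separating u from v plus n mod 2. If a, b count the
  points of X on the two sides of a cut, then summing 4ab = (a + b)^2 - (a - b)^2 over all cuts
  expresses 8 W(X) as a bound depending only on |X| minus a sum of non-negative terms, which
  vanish exactly when every imbalance a - b lies in {-1, 0, 1}.

  Moving a point of X to a free neighbour changes W by minus or plus the imbalance of the adjacent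
  cut, minus 1. So if no such move improves W, the imbalance (a periodic function with zero sum
  whose increments are governed by the occupancy of X) can have no extremum of absolute value at
  least 2: such an extremum would propagate around the whole cycle. Hence every local maximum
  attains the bound, and Ascending Local Search, which terminates because W strictly increases,
  stops at a local maximum.\<close>

abbreviation ordered_pairs :: "'a::linorder set \<Rightarrow> ('a \<times> 'a) set" where
  "ordered_pairs X \<equiv> {(u, v). u \<in> X \<and> v \<in> X \<and> u < v}"

lemma sum_ordered_pairs_double:
  fixes g :: "'b::linorder \<Rightarrow> 'b \<Rightarrow> 'a::comm_ring_1"
  assumes fin: "finite X" and sym: "\<And>u v. g u v = g v u"
  shows "2 * (\<Sum>(u,v)\<in>ordered_pairs X. g u v)
         = (\<Sum>u\<in>X. \<Sum>v\<in>X. g u v) - (\<Sum>u\<in>X. g u u)"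
proof -
  define P where "P = ordered_pairs X"
  have fin_XX: "finite (X \<times> X)" using fin by simp
  have split: "X \<times> X = P \<union> prod.swap ` P \<union> (\<lambda>u. (u, u)) ` X"
    unfolding P_def by (auto simp: image_iff)
  have "(\<Sum>u\<in>X. \<Sum>v\<in>X. g u v) = (\<Sum>p\<in>X \<times> X. case_prod g p)"
    by (rule sum.cartesian_product)
  also have "\<dots> = (\<Sum>p\<in>P. case_prod g p) + (\<Sum>p\<in>prod.swap ` P. case_prod g p)
                  + (\<Sum>p\<in>(\<lambda>u. (u, u)) ` X. case_prod g p)"
    unfolding split using fin_XX split
    by (subst sum.union_disjoint, force, force, force simp: P_def)+ (rule refl)
  also have "(\<Sum>p\<in>prod.swap ` P. case_prod g p) = (\<Sum>p\<in>P. case_prod g p)"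
    by (simp add: sum.reindex case_prod_beta sym)
  also have "(\<Sum>p\<in>(\<lambda>u. (u, u)) ` X. case_prod g p) = (\<Sum>u\<in>X. g u u)"
    by (simp add: sum.reindex inj_on_def)
  finally show ?thesis unfolding P_def by simp
qed

lemma card_ordered_pairs_double:
  assumes "finite (X :: 'a::linorder set)"
  shows "2 * int (card (ordered_pairs X)) = int (card X) * int (card X) - int (card X)"
  using sum_ordered_pairs_double[OF assms, of "\<lambda>_ _. 1 :: int"] by simp

section \<open>The distance on the cycle\<close>

locale cycle_graph =
  fixes n :: nat
  assumes n_ge_3: "3 \<le> n"
begin

abbreviation "N \<equiv> int n"
abbreviation "half \<equiv> int n div 2"
abbreviation "half' \<equiv> int n - int n div 2"
abbreviation "n_mod_2 \<equiv> int n mod 2"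

lemma half_bounds: "1 \<le> half" "2 * half \<le> N" "N \<le> 2 * half + 1" "3 \<le> N"
  using n_ge_3 by auto

lemma n_mod_2_eq: "n_mod_2 = N - 2 * half"
  by (rule minus_mult_div_eq_mod[symmetric])

lemma n_mod_2_cases: "n_mod_2 = 0 \<or> n_mod_2 = 1"
  by auto

definition circ_dist :: "nat \<Rightarrow> nat \<Rightarrow> int" where
  "circ_dist u v = min ((int v - int u) mod N) (N - (int v - int u) mod N)"

abbreviation "E \<equiv> cycle_E n"

lemma walk_forward: "u < n \<Longrightarrow> walk_len E k u ((u + k) mod n)"
proof (induction k arbitrary: u)
  case 0
  then show ?case by (simp add: wl0)
next
  case (Suc k)
  have "E u ((u + 1) mod n)" using Suc.prems n_ge_3 by (simp add: cycle_E_def)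
  moreover have "walk_len E k ((u + 1) mod n) ((u + Suc k) mod n)"
    using Suc.IH[of "(u + 1) mod n"] n_ge_3 by (simp add: mod_add_left_eq)
  ultimately show ?case by (rule wlS)
qed

lemma walk_backward: "v < n \<Longrightarrow> walk_len E k ((v + k) mod n) v"
proof (induction k)
  case 0
  then show ?case by (simp add: wl0)
next
  case (Suc k)
  have "((v + k) mod n + 1) mod n = (v + Suc k) mod n"
    using mod_add_left_eq[of "v + k" n 1] by simp
  then have "E ((v + Suc k) mod n) ((v + k) mod n)" using Suc.prems n_ge_3
    unfolding cycle_E_def by auto
  then show ?case using Suc by (blast intro: wlS)
qed

lemma walk_len_in_range: "walk_len E k u v \<Longrightarrow> u < n \<Longrightarrow> v < n"
  by (induction rule: walk_len.induct) (auto simp: cycle_E_def)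

lemma circ_dist_nonneg: "0 \<le> circ_dist u v"
proof -
  have "0 \<le> (int v - int u) mod N" "(int v - int u) mod N < N" using n_ge_3 by auto
  then show ?thesis unfolding circ_dist_def by simp
qed

lemma circ_dist_sym: "circ_dist u v = circ_dist v u"
proof -
  define d where "d = (int v - int u) mod N"
  have d: "0 \<le> d" "d < N" unfolding d_def using n_ge_3 by auto
  have "(int u - int v) mod N = (- (int v - int u)) mod N" by simp
  also have "\<dots> = (if d = 0 then 0 else N - d)" unfolding d_def by (rule zmod_zminus1_eq_if)
  finally show ?thesis using d unfolding circ_dist_def d_def[symmetric] by (auto simp: min_def)
qed

lemma circ_dist_self: "circ_dist u u = 0"
  by (simp add: circ_dist_def)

lemma circ_dist_neighbour:
  assumes "u < n" "w < n" "v < n" "w = (u + 1) mod n \<or> u = (w + 1) mod n"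
  shows "circ_dist u v \<le> circ_dist w v + 1"
proof -
  define p where "p = (int v - int w) mod N"
  define q where "q = (int v - int u) mod N"
  have p: "0 \<le> p" "p < N" and q: "0 \<le> q" "q < N" unfolding p_def q_def using n_ge_3 by auto
  have "int w = (int u + 1) mod N \<or> int u = (int w + 1) mod N"
    using assms(4) by (metis of_nat_1 of_nat_add zmod_int)
  then have "q = (p + 1) mod N \<or> p = (q + 1) mod N"
  proof
    assume "int w = (int u + 1) mod N"
    then have "p = (int v - (int u + 1)) mod N" unfolding p_def by (simp add: mod_diff_right_eq)
    then have "(p + 1) mod N = q" unfolding q_def by (simp add: mod_add_left_eq)
    then show ?thesis by simp
  next
    assume "int u = (int w + 1) mod N"
    then have "q = (int v - (int w + 1)) mod N" unfolding q_def by (simp add: mod_diff_right_eq)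
    then have "(q + 1) mod N = p" unfolding p_def by (simp add: mod_add_left_eq)
    then show ?thesis by simp
  qed
  moreover have "(p + 1) mod N = (if p + 1 = N then 0 else p + 1)"
    "(q + 1) mod N = (if q + 1 = N then 0 else q + 1)" using p q by auto
  ultimately show ?thesis unfolding circ_dist_def p_def[symmetric] q_def[symmetric]
    using p q by (auto split: if_splits)
qed

lemma circ_dist_le_walk_len: "walk_len E k u v \<Longrightarrow> u < n \<Longrightarrow> circ_dist u v \<le> int k"
proof (induction rule: walk_len.induct)
  case (wl0 u)
  then show ?case by (simp add: circ_dist_def)
next
  case (wlS u w k v)
  have "w < n" using wlS.hyps(1) by (simp add: cycle_E_def)
  moreover have "v < n" using walk_len_in_range[OF wlS.hyps(2) \<open>w < n\<close>] .
  ultimately have "circ_dist u v \<le> circ_dist w v + 1"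
    using circ_dist_neighbour wlS by (auto simp: cycle_E_def)
  then show ?case using wlS \<open>w < n\<close> by simp
qed

lemma walk_of_circ_dist:
  assumes "u < n" "v < n"
  shows "walk_len E (nat (circ_dist u v)) u v"
proof -
  define d where "d = (int v - int u) mod N"
  have d: "0 \<le> d" "d < N" unfolding d_def using n_ge_3 by auto
  have "int ((u + nat d) mod n) = int v"
    using d assms unfolding d_def by (simp add: zmod_int mod_add_right_eq)
  then have fwd: "walk_len E (nat d) u v"
    using walk_forward[OF assms(1), of "nat d"] by simp
  have "int ((v + nat (N - d)) mod n) = int u"
  proof -
    have "int ((v + nat (N - d)) mod n) = (int v + (N - d)) mod N"
      using d by (simp add: zmod_int)
    also have "\<dots> = ((int v - d) + N) mod N" by (simp add: algebra_simps)
    also have "\<dots> = (int v - d) mod N" by (rule mod_add_self2)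
    also have "\<dots> = (int v - (int v - int u)) mod N"
      unfolding d_def by (simp add: mod_diff_right_eq)
    finally show ?thesis using assms by simp
  qed
  then have bwd: "walk_len E (nat (N - d)) u v"
    using walk_backward[OF assms(2), of "nat (N - d)"] by simp
  show ?thesis
    using fwd bwd d unfolding circ_dist_def d_def[symmetric] by (simp add: min_def)
qed

lemma gdist_eq_circ_dist:
  assumes "u < n" "v < n"
  shows "int (gdist E u v) = circ_dist u v"
proof -
  have "gdist E u v = nat (circ_dist u v)" unfolding gdist_def
    by (rule Least_equality) (use walk_of_circ_dist[OF assms] circ_dist_le_walk_len assms in force)+
  then show ?thesis using circ_dist_nonneg by simp
qed

section \<open>Cuts of the cycle\<close>

lemma sum_periodic_shift_1:
  fixes f :: "int \<Rightarrow> int"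
  assumes per: "\<And>x. f (x + N) = f x"
  shows "(\<Sum>i<n. f (c + 1 + int i)) = (\<Sum>i<n. f (c + int i))"
proof -
  have "(\<Sum>i<n. f (c + int i)) + f (c + N) = f c + (\<Sum>i<n. f (c + int (Suc i)))"
    using sum.lessThan_Suc[of "\<lambda>i. f (c + int i)" n]
      sum.lessThan_Suc_shift[of "\<lambda>i. f (c + int i)" n]
    by simp
  moreover have "(\<Sum>i<n. f (c + int (Suc i))) = (\<Sum>i<n. f (c + 1 + int i))"
    by (simp add: add.assoc)
  ultimately show ?thesis using per[of c] by simp
qed

lemma sum_periodic_shift:
  fixes f :: "int \<Rightarrow> int"
  assumes per: "\<And>x. f (x + N) = f x"
  shows "(\<Sum>i<n. f (c + int i)) = (\<Sum>i<n. f (int i))"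
proof (induction c rule: int_induct[where k=0])
  case base
  then show ?case by simp
next
  case (step1 i)
  then show ?case using sum_periodic_shift_1[where f=f, OF per, of i] by simp
next
  case (step2 i)
  then show ?case using sum_periodic_shift_1[where f=f, OF per, of "i - 1"] by simp
qed

lemma sum_periodic_reflect:
  fixes f :: "int \<Rightarrow> int"
  assumes per: "\<And>x. f (x + N) = f x"
  shows "(\<Sum>i<n. f (c - int i)) = (\<Sum>i<n. f (int i))"
proof -
  have "(\<Sum>i<n. f (c - int i)) = (\<Sum>i<n. f (c - int (n - Suc i)))"
    by (rule sum.nat_diff_reindex[symmetric])
  also have "\<dots> = (\<Sum>i<n. f ((c - N + 1) + int i))"
    by (intro sum.cong refl arg_cong[where f=f]) (auto simp: of_nat_diff)
  also have "\<dots> = (\<Sum>i<n. f (int i))" by (rule sum_periodic_shift[where f=f, OF per])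
  finally show ?thesis .
qed

lemma sum_of_bool_int_interval:
  assumes "0 \<le> lo" "lo \<le> hi" "hi \<le> N"
  shows "(\<Sum>i<n. of_bool (lo \<le> int i \<and> int i < hi) :: int) = hi - lo"
proof -
  have "{..<n} \<inter> {i. lo \<le> int i \<and> int i < hi} = {nat lo..<nat hi}"
    using assms by auto
  then show ?thesis using assms by simp
qed

text \<open>A cut at j: in_arc j holds for the half vertices j+1, ..., j+half and in_opp_arc j for
  the half vertices j+half'+1, ..., j+n (mod n); for odd n the vertex j+half+1 is in neither.\<close>
definition cut_pos :: "int \<Rightarrow> nat \<Rightarrow> int" where
  "cut_pos j z = (int z - j - 1) mod N"

definition in_arc :: "int \<Rightarrow> nat \<Rightarrow> bool" where
  "in_arc j z \<longleftrightarrow> cut_pos j z < half"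

definition in_opp_arc :: "int \<Rightarrow> nat \<Rightarrow> bool" where
  "in_opp_arc j z \<longleftrightarrow> half' \<le> cut_pos j z"

definition separates :: "int \<Rightarrow> nat \<Rightarrow> nat \<Rightarrow> int" where
  "separates j u v = of_bool (in_arc j u \<and> in_opp_arc j v) + of_bool (in_opp_arc j u \<and> in_arc j v)"

lemma cut_pos_bounds: "0 \<le> cut_pos j z" "cut_pos j z < N"
  unfolding cut_pos_def using n_ge_3 by auto

lemma cut_pos_periodic: "cut_pos (j + N) z = cut_pos j z"
proof -
  have "(int z - (j + N) - 1) mod N = ((int z - j - 1) + (- 1) * N) mod N"
    by (simp add: algebra_simps)
  also have "\<dots> = (int z - j - 1) mod N" by (rule mod_mult_self1)
  finally show ?thesis unfolding cut_pos_def .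
qed

lemma arc_crossings:
  assumes d: "1 \<le> d" "d < N"
  shows "(\<Sum>i<n. of_bool (int i < half \<and> half' \<le> (int i + d) mod N)
                + of_bool (half' \<le> int i \<and> (int i + d) mod N < half) :: int)
         = 2 * min d (N - d) - n_mod_2"
proof -
  have md: "(int i + d) mod N = (if int i + d < N then int i + d else int i + d - N)"
    if "i < n" for i
  proof (cases "int i + d < N")
    case False
    have "(int i + d) mod N = (int i + d - N + N) mod N" by simp
    also have "\<dots> = int i + d - N"
      by (subst mod_add_self2, rule mod_pos_pos_trivial) (use False d that in auto)
    finally show ?thesis using False by simp
  qed (use d in simp)
  note facts = half_bounds n_mod_2_eq n_mod_2_cases d
  show ?thesis
  proof (cases "d \<le> half")
    case True
    have "(\<Sum>i<n. of_bool (int i < half \<and> half' \<le> (int i + d) mod N)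
                + of_bool (half' \<le> int i \<and> (int i + d) mod N < half) :: int)
        = (\<Sum>i<n. of_bool (half' - d \<le> int i \<and> int i < half)
                  + of_bool (N - d \<le> int i \<and> int i < N))"
      by (rule sum.cong[OF refl]) (use md facts True in \<open>auto split: if_splits\<close>)
    also have "\<dots> = (half - (half' - d)) + (N - (N - d))"
      unfolding sum.distrib using True facts by (subst (1 2) sum_of_bool_int_interval) auto
    finally show ?thesis using True facts by (simp add: min_def)
  next
    case False
    have "(\<Sum>i<n. of_bool (int i < half \<and> half' \<le> (int i + d) mod N)
                + of_bool (half' \<le> int i \<and> (int i + d) mod N < half) :: int)
        = (\<Sum>i<n. of_bool (0 \<le> int i \<and> int i < N - d)
                  + of_bool (half' \<le> int i \<and> int i < N + half - d))"
      by (rule sum.cong[OF refl]) (use md facts False in \<open>auto split: if_splits\<close>)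
    also have "\<dots> = (N - d - 0) + (N + half - d - half')"
      unfolding sum.distrib using False facts by (subst (1 2) sum_of_bool_int_interval) auto
    finally show ?thesis using False facts by (simp add: min_def)
  qed
qed

lemma double_circ_dist_eq_cuts:
  assumes uv: "u < n" "v < n" "u \<noteq> v"
  shows "2 * circ_dist u v = (\<Sum>i<n. separates (int i) u v) + n_mod_2"
proof -
  define d where "d = (int v - int u) mod N"
  have d: "0 \<le> d" "d < N" unfolding d_def using n_ge_3 by auto
  have "d \<noteq> 0"
  proof
    assume "d = 0"
    then have "int v mod N = int u mod N" unfolding d_def by (simp add: mod_eq_dvd_iff dvd_eq_mod_eq_0)
    then show False using uv by simp
  qed
  have "(\<Sum>i<n. separates (int i) u v) = (\<Sum>i<n. separates (int u - 1 - int i) u v)"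
    by (rule sum_periodic_reflect[symmetric])
      (simp add: separates_def in_arc_def in_opp_arc_def cut_pos_periodic)
  also have "\<dots> = (\<Sum>i<n. of_bool (int i < half \<and> half' \<le> (int i + d) mod N)
                + of_bool (half' \<le> int i \<and> (int i + d) mod N < half))"
  proof (rule sum.cong[OF refl])
    fix i assume "i \<in> {..<n}"
    then have "cut_pos (int u - 1 - int i) u = int i" unfolding cut_pos_def by simp
    moreover have "cut_pos (int u - 1 - int i) v = (int i + d) mod N"
      unfolding cut_pos_def d_def by (simp add: algebra_simps mod_add_right_eq)
    ultimately show "separates (int u - 1 - int i) u v
        = of_bool (int i < half \<and> half' \<le> (int i + d) mod N)
          + of_bool (half' \<le> int i \<and> (int i + d) mod N < half)"
      unfolding separates_def in_arc_def in_opp_arc_def by simp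
  qed
  also have "\<dots> = 2 * circ_dist u v - n_mod_2"
    using arc_crossings[of d] d \<open>d \<noteq> 0\<close> unfolding circ_dist_def d_def by simp
  finally show ?thesis by simp
qed

lemma finite_below_n: "X \<subseteq> {..<n} \<Longrightarrow> finite X"
  using finite_subset by blast

lemma Wsum_eq_sum_circ_dist:
  assumes "X \<subseteq> {..<n}"
  shows "int (Wsum E X) = (\<Sum>(u,v)\<in>ordered_pairs X. circ_dist u v)"
  unfolding Wsum_def of_nat_sum
  by (rule sum.cong) (use assms in \<open>auto simp: gdist_eq_circ_dist\<close>)

lemma double_Wsum_eq_sum_sum:
  assumes "X \<subseteq> {..<n}"
  shows "2 * int (Wsum E X) = (\<Sum>u\<in>X. \<Sum>v\<in>X. circ_dist u v)"
  using sum_ordered_pairs_double[OF finite_below_n[OF assms], of circ_dist]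
  by (simp add: Wsum_eq_sum_circ_dist[OF assms] circ_dist_sym circ_dist_self)

definition arc_count :: "nat set \<Rightarrow> int \<Rightarrow> int" where
  "arc_count X j = (\<Sum>z\<in>X. of_bool (in_arc j z))"

lemma cut_pos_shift: "cut_pos (j + c) z = (cut_pos j z - c) mod N"
proof -
  have "(int z - (j + c) - 1) mod N = ((int z - j - 1) - c) mod N"
    by (simp add: algebra_simps)
  then show ?thesis unfolding cut_pos_def by (simp add: mod_diff_left_eq)
qed

lemma in_opp_arc_iff_in_arc: "in_opp_arc j z \<longleftrightarrow> in_arc (j + half') z"
proof -
  have t: "0 \<le> cut_pos j z" "cut_pos j z < N" by (rule cut_pos_bounds)+
  show ?thesis unfolding in_opp_arc_def in_arc_def cut_pos_shift
  proof (cases "half' \<le> cut_pos j z")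
    case True
    then have "(cut_pos j z - half') mod N = cut_pos j z - half'"
      using t half_bounds by (intro mod_pos_pos_trivial) auto
    then show "half' \<le> cut_pos j z \<longleftrightarrow> (cut_pos j z - half') mod N < half"
      using True t half_bounds by simp
  next
    case False
    have "(cut_pos j z - half') mod N = (cut_pos j z - half' + N) mod N"
      by (rule mod_add_self2[symmetric])
    also have "\<dots> = cut_pos j z - half' + N"
      using False t half_bounds by (intro mod_pos_pos_trivial) auto
    finally show "half' \<le> cut_pos j z \<longleftrightarrow> (cut_pos j z - half') mod N < half"
      using False t half_bounds by simp
  qed
qed

lemma sum_separates_ordered_pairs:
  assumes "finite X"
  shows "(\<Sum>(u,v)\<in>ordered_pairs X. separates j u v) = arc_count X j * arc_count X (j + half')"
proof -
  have "2 * (\<Sum>(u,v)\<in>ordered_pairs X. separates j u v)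
        = (\<Sum>u\<in>X. \<Sum>v\<in>X. separates j u v) - (\<Sum>u\<in>X. separates j u u)"
    by (rule sum_ordered_pairs_double[OF assms]) (auto simp: separates_def)
  also have "(\<Sum>u\<in>X. separates j u u) = 0"
    using half_bounds by (auto simp: separates_def in_arc_def in_opp_arc_def intro!: sum.neutral)
  also have "(\<Sum>u\<in>X. \<Sum>v\<in>X. separates j u v) = 2 * (arc_count X j * arc_count X (j + half'))"
    unfolding separates_def in_opp_arc_iff_in_arc of_bool_conj sum.distrib
    by (simp only: arc_count_def sum_product[symmetric]) simp
  finally show ?thesis by simp
qed

lemma double_Wsum_eq_cuts:
  assumes X: "X \<subseteq> {..<n}"
  shows "2 * int (Wsum E X)
         = (\<Sum>i<n. arc_count X (int i) * arc_count X (int i + half'))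
           + n_mod_2 * int (card (ordered_pairs X))"
proof -
  have "2 * int (Wsum E X) = (\<Sum>(u,v)\<in>ordered_pairs X. 2 * circ_dist u v)"
    unfolding Wsum_eq_sum_circ_dist[OF X] by (simp add: sum_distrib_left case_prod_beta)
  also have "\<dots> = (\<Sum>(u,v)\<in>ordered_pairs X. (\<Sum>i<n. separates (int i) u v) + n_mod_2)"
    by (rule sum.cong) (use X in \<open>auto simp: double_circ_dist_eq_cuts\<close>)
  also have "\<dots> = (\<Sum>i<n. \<Sum>(u,v)\<in>ordered_pairs X. separates (int i) u v)
                  + n_mod_2 * int (card (ordered_pairs X))"
    by (simp add: sum.distrib case_prod_beta mult.commute sum.swap[of _ "{..<n}"])
  finally show ?thesis
    by (simp add: sum_separates_ordered_pairs finite_below_n[OF X])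
qed

section \<open>Imbalance of the cuts\<close>

definition occupied :: "nat set \<Rightarrow> int \<Rightarrow> int" where
  "occupied X t = of_bool (nat (t mod N) \<in> X)"

definition imbalance :: "nat set \<Rightarrow> int \<Rightarrow> int" where
  "imbalance X j = arc_count X j - arc_count X (j + half')"

lemma occupied_cases: "occupied X t = 0 \<or> occupied X t = 1"
  unfolding occupied_def by simp

lemma occupied_periodic: "occupied X (t + N) = occupied X t"
  unfolding occupied_def by simp

lemma occupied_eq_of_bool: "int z = t mod N \<Longrightarrow> occupied X t = of_bool (z \<in> X)"
  unfolding occupied_def by (metis nat_int)

lemma nat_mod_N: "int (nat (j mod N)) = j mod N" "nat (j mod N) < n"
  using n_ge_3 by (simp_all add: nat_less_iff)

lemma cut_pos_mod: "cut_pos (j mod N) z = cut_pos j z"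
proof -
  have "(int z - j mod N - 1) mod N = ((int z - 1) - j mod N) mod N" by (simp add: algebra_simps)
  also have "\<dots> = ((int z - 1) - j) mod N" by (rule mod_diff_right_eq)
  finally show ?thesis unfolding cut_pos_def by (simp add: algebra_simps)
qed

lemma arc_count_mod: "arc_count X (j mod N) = arc_count X j"
  unfolding arc_count_def in_arc_def cut_pos_mod ..

lemma arc_count_periodic: "arc_count X (j + N) = arc_count X j"
  unfolding arc_count_def in_arc_def cut_pos_periodic ..

lemma imbalance_mod: "imbalance X (j mod N) = imbalance X j"
proof -
  have "arc_count X (j mod N + half') = arc_count X (j + half')"
    using arc_count_mod[of X "j mod N + half'"] arc_count_mod[of X "j + half'"]
    by (simp add: mod_add_left_eq)
  then show ?thesis unfolding imbalance_def arc_count_mod by simp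
qed

lemma cut_pos_eq_iff:
  assumes "z < n" "0 \<le> c" "c < N"
  shows "cut_pos j z = c \<longleftrightarrow> z = nat ((j + c + 1) mod N)"
proof -
  have "cut_pos j z = c \<longleftrightarrow> (int z - j - 1) mod N = c mod N"
    unfolding cut_pos_def using assms by simp
  also have "\<dots> \<longleftrightarrow> int z mod N = (j + c + 1) mod N"
    by (simp add: mod_eq_dvd_iff algebra_simps)
  also have "\<dots> \<longleftrightarrow> z = nat ((j + c + 1) mod N)" using assms n_ge_3 by auto
  finally show ?thesis .
qed

lemma sum_cut_pos_eq:
  assumes X: "X \<subseteq> {..<n}" and c: "0 \<le> c" "c < N"
  shows "(\<Sum>z\<in>X. of_bool (cut_pos j z = c)) = occupied X (j + c + 1)"
proof -
  have "(\<Sum>z\<in>X. of_bool (cut_pos j z = c) :: int) = (\<Sum>z\<in>X. of_bool (z = nat ((j + c + 1) mod N)))"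
    by (rule sum.cong) (use X c cut_pos_eq_iff in auto)
  also have "\<dots> = occupied X (j + c + 1)"
    unfolding occupied_def of_bool_def using finite_below_n[OF X]
    by (simp add: sum.delta' del: sum_of_bool_eq)
  finally show ?thesis .
qed

lemma in_arc_step:
  "of_bool (in_arc (j + 1) z) - of_bool (in_arc j z)
    = (of_bool (cut_pos j z = half) - of_bool (cut_pos j z = 0) :: int)"
proof -
  have t: "0 \<le> cut_pos j z" "cut_pos j z < N" by (rule cut_pos_bounds)+
  show ?thesis
  proof (cases "cut_pos j z = 0")
    case True
    have "(cut_pos j z - 1) mod N = N - 1" using True n_ge_3 by (simp add: zmod_zminus1_eq_if)
    then show ?thesis unfolding in_arc_def cut_pos_shift using True half_bounds by auto
  next
    case False
    have "(cut_pos j z - 1) mod N = cut_pos j z - 1" using False t by (intro mod_pos_pos_trivial) auto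
    then show ?thesis unfolding in_arc_def cut_pos_shift using False t by auto
  qed
qed

lemma arc_count_step:
  assumes X: "X \<subseteq> {..<n}"
  shows "arc_count X (j + 1) - arc_count X j = occupied X (j + half + 1) - occupied X (j + 1)"
proof -
  have "arc_count X (j + 1) - arc_count X j
        = (\<Sum>z\<in>X. of_bool (cut_pos j z = half)) - (\<Sum>z\<in>X. of_bool (cut_pos j z = 0))"
    unfolding arc_count_def sum_subtractf[symmetric] in_arc_step ..
  then show ?thesis
    using sum_cut_pos_eq[OF X, of half j] sum_cut_pos_eq[OF X, of 0 j] half_bounds by simp
qed

lemma in_arc_add_in_opp_arc:
  "of_bool (in_arc j z) + of_bool (in_opp_arc j z) = (1 - n_mod_2 * of_bool (cut_pos j z = half) :: int)"
  using n_mod_2_cases n_mod_2_eq unfolding in_arc_def in_opp_arc_def by auto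

lemma arc_count_add_opposite:
  assumes X: "X \<subseteq> {..<n}"
  shows "arc_count X j + arc_count X (j + half') = int (card X) - n_mod_2 * occupied X (j + half + 1)"
proof -
  have "arc_count X j + arc_count X (j + half')
        = (\<Sum>z\<in>X. of_bool (in_arc j z) + of_bool (in_opp_arc j z))"
    unfolding arc_count_def in_opp_arc_iff_in_arc sum.distrib ..
  also have "\<dots> = int (card X) - n_mod_2 * (\<Sum>z\<in>X. of_bool (cut_pos j z = half))"
    unfolding in_arc_add_in_opp_arc by (simp add: sum_subtractf sum_distrib_left)
  finally show ?thesis using sum_cut_pos_eq[OF X, of half j] half_bounds by simp
qed

lemma sum_occupied:
  assumes X: "X \<subseteq> {..<n}"
  shows "(\<Sum>i<n. occupied X (c + int i)) = int (card X)"
proof -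
  have "(\<Sum>i<n. occupied X (c + int i)) = (\<Sum>i<n. of_bool (i \<in> X))"
    unfolding sum_periodic_shift[where f="occupied X", OF occupied_periodic]
    by (simp add: occupied_def)
  also have "\<dots> = int (card X)"
    using X by (simp add: Int_absorb1 Int_def[symmetric] subset_eq)
  finally show ?thesis .
qed

lemma sum_imbalance: "(\<Sum>i<n. imbalance X (int i)) = 0"
  using sum_periodic_shift[where f="arc_count X", OF arc_count_periodic, of half']
  unfolding imbalance_def by (simp add: sum_subtractf add.commute)

lemma imbalance_step:
  assumes X: "X \<subseteq> {..<n}"
  shows "imbalance X (j + 1) - imbalance X j
         = occupied X (j + half + 1) + occupied X (j + half' + 1) - 2 * occupied X (j + 1)"
proof -
  have "occupied X (j + half' + half + 1) = occupied X (j + 1)"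
    using occupied_periodic[of X "j + 1"] by (simp add: algebra_simps)
  then show ?thesis
    using arc_count_step[OF X, of j] arc_count_step[OF X, of "j + half'"]
    unfolding imbalance_def by (simp add: algebra_simps)
qed

lemma imbalance_step':
  assumes X: "X \<subseteq> {..<n}"
  shows "imbalance X j - imbalance X (j - 1)
         = occupied X (j + half) + occupied X (j + half') - 2 * occupied X j"
  using imbalance_step[OF X, of "j - 1"] by (simp add: algebra_simps)

lemma imbalance_antipodal:
  assumes X: "X \<subseteq> {..<n}"
  shows "imbalance X j + imbalance X (j + half)
         = n_mod_2 * (occupied X (j + half + 1) - occupied X j)"
proof -
  have "arc_count X (j + half + half') = arc_count X j"
    using arc_count_periodic[of X j] by (simp add: algebra_simps)
  then have sum: "imbalance X j + imbalance X (j + half) = arc_count X (j + half) - arc_count X (j + half')"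
    unfolding imbalance_def by simp
  consider "n_mod_2 = 0" | "n_mod_2 = 1" using n_mod_2_cases by blast
  then show ?thesis
  proof cases
    case 1
    then have "j + half' = j + half" using n_mod_2_eq by linarith
    then have "arc_count X (j + half') = arc_count X (j + half)" by (simp only:)
    then show ?thesis using sum 1 by simp
  next
    case 2
    have h: "j + half' = j + half + 1" "j + half + half + 1 = j + N"
      using 2 n_mod_2_eq by linarith+
    have "occupied X (j + half + half + 1) = occupied X j"
      unfolding h(2) by (rule occupied_periodic)
    moreover have "arc_count X (j + half') = arc_count X (j + half + 1)"
      unfolding h(1) ..
    ultimately show ?thesis
      using sum arc_count_step[OF X, of "j + half"] unfolding 2 mult_1 by linarith
  qed
qed

section \<open>Moving one point\<close>

lemma min_dist_step:
  assumes "1 \<le> t" "t \<le> N - 2"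
  shows "min t (N - t) - min (t + 1) (N - t - 1) = of_bool (half' \<le> t) - of_bool (t < half)"
proof -
  note facts = half_bounds n_mod_2_eq n_mod_2_cases
  consider (below) "t < half" | (above) "half' \<le> t" | (middle) "half \<le> t" "t < half'"
    by linarith
  then show ?thesis
  proof cases
    case below
    then have "2 * t + 2 \<le> N" "\<not> half' \<le> t" using facts by linarith+
    then show ?thesis using below by (simp add: min_def)
  next
    case above
    then have "\<not> 2 * t + 2 \<le> N" "\<not> t < half" "2 * t \<le> N \<longrightarrow> t = N - t"
      using facts by linarith+
    then show ?thesis using above by (auto simp: min_def)
  next
    case middle
    then have "t = half" "N = 2 * half + 1" using facts by linarith+
    then show ?thesis using middle by (simp add: min_def)
  qed
qed

lemma int_suc_mod: "int ((x + 1) mod n) = (int x + 1) mod N"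
  by (simp add: zmod_int ac_simps)

lemma int_pred_mod: "x < n \<Longrightarrow> int ((x + n - 1) mod n) = (int x - 1) mod N"
proof -
  have "int ((x + n - 1) mod n) = (int x - 1 + N) mod N"
    using n_ge_3 by (simp add: zmod_int of_nat_diff algebra_simps)
  then show ?thesis by (simp only: mod_add_self2)
qed

lemma suc_pred_mod: "x < n \<Longrightarrow> ((x + n - 1) mod n + 1) mod n = x"
  using n_ge_3 mod_add_left_eq[of "x + n - 1" n 1] by simp

lemma circ_dist_forward_diff:
  assumes "x < n" "y < n" "y \<noteq> x" "y \<noteq> (x + 1) mod n"
  shows "circ_dist ((x + 1) mod n) y - circ_dist x y
         = of_bool (in_opp_arc (int x) y) - of_bool (in_arc (int x) y)"
proof -
  define t where "t = cut_pos (int x) y"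
  have t: "0 \<le> t" "t < N" unfolding t_def by (rule cut_pos_bounds)+
  have "t \<noteq> 0"
    using cut_pos_eq_iff[of y 0 "int x"] assms n_ge_3 int_suc_mod[of x] unfolding t_def by auto
  moreover have "t \<noteq> N - 1"
    using cut_pos_eq_iff[of y "N - 1" "int x"] assms n_ge_3 unfolding t_def by auto
  moreover have "(int y - int ((x + 1) mod n)) mod N = t"
    unfolding int_suc_mod t_def cut_pos_def by (simp add: mod_diff_right_eq algebra_simps)
  moreover have "(t + 1) mod N = (int y - int x - 1 + 1) mod N"
    unfolding t_def cut_pos_def by (rule mod_add_left_eq)
  ultimately have "circ_dist ((x + 1) mod n) y - circ_dist x y
                   = min t (N - t) - min (t + 1) (N - t - 1)"
    using t unfolding circ_dist_def by (simp add: algebra_simps)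
  also have "\<dots> = of_bool (half' \<le> t) - of_bool (t < half)"
    using min_dist_step \<open>t \<noteq> 0\<close> \<open>t \<noteq> N - 1\<close> t by simp
  finally show ?thesis unfolding in_arc_def in_opp_arc_def t_def .
qed

lemma circ_dist_backward_diff:
  assumes "x < n" "y < n" "y \<noteq> x" "y \<noteq> (x + n - 1) mod n"
  shows "circ_dist ((x + n - 1) mod n) y - circ_dist x y
         = of_bool (in_arc (int x - 1) y) - of_bool (in_opp_arc (int x - 1) y)"
proof -
  let ?x' = "(x + n - 1) mod n"
  have "circ_dist x y - circ_dist ?x' y
        = of_bool (in_opp_arc (int ?x') y) - of_bool (in_arc (int ?x') y)"
    using circ_dist_forward_diff[of ?x' y] assms n_ge_3 suc_pred_mod[of x] by simp
  moreover have "in_arc (int ?x') = in_arc (int x - 1)" "in_opp_arc (int ?x') = in_opp_arc (int x - 1)"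
    unfolding int_pred_mod[OF assms(1)] by (simp_all add: in_arc_def in_opp_arc_def cut_pos_mod fun_eq_iff)
  ultimately show ?thesis by simp
qed

lemma Wsum_move_diff:
  assumes X: "X \<subseteq> {..<n}" and x: "x \<in> X" and x': "x' < n" "x' \<notin> X"
  shows "int (Wsum E ((X - {x}) \<union> {x'})) - int (Wsum E X)
         = (\<Sum>v\<in>X - {x}. circ_dist x' v - circ_dist x v)"
proof -
  define R where "R = X - {x}"
  have R: "finite R" "x \<notin> R" "x' \<notin> R" unfolding R_def using finite_below_n[OF X] x' by auto
  have double_sum_insert: "(\<Sum>u\<in>insert w R. \<Sum>v\<in>insert w R. circ_dist u v)
        = (\<Sum>u\<in>R. \<Sum>v\<in>R. circ_dist u v) + 2 * (\<Sum>v\<in>R. circ_dist w v)" if "w \<notin> R" for w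
    using R(1) that by (simp add: sum.distrib circ_dist_self circ_dist_sym[of _ w])
  have "X = insert x R" "(X - {x}) \<union> {x'} = insert x' R" unfolding R_def using x by auto
  moreover have "insert x' R \<subseteq> {..<n}" using X x' unfolding R_def by auto
  ultimately show ?thesis
    using double_Wsum_eq_sum_sum[OF X] double_Wsum_eq_sum_sum[of "insert x' R"]
      double_sum_insert[OF R(2)] double_sum_insert[OF R(3)]
    unfolding R_def[symmetric] by (simp add: sum_subtractf)
qed

lemma Wsum_forward_move:
  assumes X: "X \<subseteq> {..<n}" and x: "x \<in> X" and x': "(x + 1) mod n \<notin> X"
  shows "int (Wsum E ((X - {x}) \<union> {(x + 1) mod n})) - int (Wsum E X) = - imbalance X (int x) - 1"
proof -
  have "(\<Sum>v\<in>X - {x}. circ_dist ((x + 1) mod n) v - circ_dist x v)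
        = (\<Sum>v\<in>X - {x}. of_bool (in_opp_arc (int x) v) - of_bool (in_arc (int x) v))"
    by (rule sum.cong[OF refl], rule circ_dist_forward_diff) (use X x x' in auto)
  also have "\<dots> = (\<Sum>v\<in>X. of_bool (in_opp_arc (int x) v) - of_bool (in_arc (int x) v)) - 1"
    using finite_below_n[OF X] x half_bounds
    by (simp add: sum_diff1 in_arc_def in_opp_arc_def cut_pos_def zmod_zminus1_eq_if)
  finally show ?thesis
    using Wsum_move_diff[OF X x _ x'] n_ge_3
    unfolding imbalance_def arc_count_def in_opp_arc_iff_in_arc by (simp add: sum_subtractf)
qed

lemma Wsum_backward_move:
  assumes X: "X \<subseteq> {..<n}" and x: "x \<in> X" and x': "(x + n - 1) mod n \<notin> X"
  shows "int (Wsum E ((X - {x}) \<union> {(x + n - 1) mod n})) - int (Wsum E X) = imbalance X (int x - 1) - 1"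
proof -
  have "(\<Sum>v\<in>X - {x}. circ_dist ((x + n - 1) mod n) v - circ_dist x v)
        = (\<Sum>v\<in>X - {x}. of_bool (in_arc (int x - 1) v) - of_bool (in_opp_arc (int x - 1) v))"
    by (rule sum.cong[OF refl], rule circ_dist_backward_diff) (use X x x' in auto)
  also have "\<dots> = (\<Sum>v\<in>X. of_bool (in_arc (int x - 1) v) - of_bool (in_opp_arc (int x - 1) v)) - 1"
    using finite_below_n[OF X] x half_bounds
    by (simp add: sum_diff1 in_arc_def in_opp_arc_def cut_pos_def)
  finally show ?thesis
    using Wsum_move_diff[OF X x _ x'] n_ge_3
    unfolding imbalance_def arc_count_def in_opp_arc_iff_in_arc by (simp add: sum_subtractf)
qed

section \<open>Local maxima are balanced\<close>

text \<open>By Wsum_forward_move and Wsum_backward_move, step_stable X says that no point of X can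
  improve W by moving to a free neighbour.\<close>
definition step_stable :: "nat set \<Rightarrow> bool" where
  "step_stable X \<longleftrightarrow>
     (\<forall>j. occupied X j = 1 \<and> occupied X (j + 1) = 0 \<longrightarrow> -1 \<le> imbalance X j) \<and>
     (\<forall>j. occupied X j = 0 \<and> occupied X (j + 1) = 1 \<longrightarrow> imbalance X j \<le> 1)"

text \<open>The increments of the imbalance at j and at the antipodal cut are determined by the
  occupancy of a few vertices; at an extremum of absolute value at least 2 every pattern with a
  nonzero increment would let a point near j or near j + half move with profit.\<close>
lemma imbalance_flat_at_max:
  assumes X: "X \<subseteq> {..<n}" and stable: "step_stable X"
    and big: "2 \<le> imbalance X j"
    and max: "imbalance X (j - 1) \<le> imbalance X j" "imbalance X (j + 1) \<le> imbalance X j"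
  shows "imbalance X (j + 1) = imbalance X j"
proof -
  note steps = imbalance_step[OF X, of j] imbalance_step'[OF X, of j]
  note occ = occupied_cases[of X j] occupied_cases[of X "j + 1"] occupied_cases[of X "j + half"]
    occupied_cases[of X "j + half + 1"] occupied_cases[of X "j + half + 2"]
  have backward: "occupied X j = 0 \<Longrightarrow> occupied X (j + 1) = 1 \<Longrightarrow> imbalance X j \<le> 1"
    using stable unfolding step_stable_def by blast
  consider "n_mod_2 = 0" | "n_mod_2 = 1" using n_mod_2_cases by blast
  then show ?thesis
  proof cases
    case 1
    then have h: "j + half' + 1 = j + half + 1" "j + half' = j + half"
      using n_mod_2_eq by linarith+
    have "imbalance X (j + half) = - imbalance X j"
      using imbalance_antipodal[OF X, of j] 1 by simp
    moreover have "occupied X (j + half) = 1 \<Longrightarrow> occupied X (j + half + 1) = 0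
                   \<Longrightarrow> -1 \<le> imbalance X (j + half)"
      using stable unfolding step_stable_def by blast
    ultimately show ?thesis using steps occ backward big max unfolding h by smt
  next
    case 2
    then have h: "j + half' + 1 = j + half + 2" "j + half' = j + half + 1"
      using n_mod_2_eq by linarith+
    have "imbalance X (j + 1) + imbalance X (j + half + 1)
          = occupied X (j + half + 2) - occupied X (j + 1)"
      using imbalance_antipodal[OF X, of "j + 1"] 2 by (simp add: algebra_simps)
    moreover have "occupied X (j + half + 1) = 1 \<Longrightarrow> occupied X (j + half + 2) = 0
                   \<Longrightarrow> -1 \<le> imbalance X (j + half + 1)"
      using stable unfolding step_stable_def by (metis add.assoc one_add_one)
    ultimately show ?thesis using steps occ backward big max unfolding h by smt
  qed
qed

lemma imbalance_flat_at_min: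
  assumes X: "X \<subseteq> {..<n}" and stable: "step_stable X"
    and small: "imbalance X j \<le> -2"
    and min: "imbalance X j \<le> imbalance X (j - 1)" "imbalance X j \<le> imbalance X (j + 1)"
  shows "imbalance X (j + 1) = imbalance X j"
proof -
  note steps = imbalance_step[OF X, of j] imbalance_step'[OF X, of j]
  note occ = occupied_cases[of X j] occupied_cases[of X "j + 1"] occupied_cases[of X "j + half"]
    occupied_cases[of X "j + half + 1"] occupied_cases[of X "j + half + 2"]
  have forward: "occupied X j = 1 \<Longrightarrow> occupied X (j + 1) = 0 \<Longrightarrow> -1 \<le> imbalance X j"
    using stable unfolding step_stable_def by blast
  consider "n_mod_2 = 0" | "n_mod_2 = 1" using n_mod_2_cases by blast
  then show ?thesis
  proof cases
    case 1
    then have h: "j + half' + 1 = j + half + 1" "j + half' = j + half"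
      using n_mod_2_eq by linarith+
    have "imbalance X (j + half) = - imbalance X j"
      using imbalance_antipodal[OF X, of j] 1 by simp
    moreover have "occupied X (j + half) = 0 \<Longrightarrow> occupied X (j + half + 1) = 1
                   \<Longrightarrow> imbalance X (j + half) \<le> 1"
      using stable unfolding step_stable_def by blast
    ultimately show ?thesis using steps occ forward small min unfolding h by smt
  next
    case 2
    then have h: "j + half' + 1 = j + half + 2" "j + half' = j + half + 1"
      using n_mod_2_eq by linarith+
    have "imbalance X (j + 1) + imbalance X (j + half + 1)
          = occupied X (j + half + 2) - occupied X (j + 1)"
      using imbalance_antipodal[OF X, of "j + 1"] 2 by (simp add: algebra_simps)
    moreover have "occupied X (j + half + 1) = 0 \<Longrightarrow> occupied X (j + half + 2) = 1
                   \<Longrightarrow> imbalance X (j + half + 1) \<le> 1"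
      using stable unfolding step_stable_def by (metis add.assoc one_add_one)
    ultimately show ?thesis using steps occ forward small min unfolding h by smt
  qed
qed

text \<open>A discrete maximum principle: a maximum of at least 2 would propagate around the whole
  cycle, contradicting the zero sum.\<close>
lemma periodic_zero_sum_le_1:
  fixes f :: "int \<Rightarrow> int"
  assumes per: "\<And>j. f (j mod N) = f j" and zero_sum: "(\<Sum>i<n. f (int i)) = 0"
    and flat: "\<And>j. \<forall>k. f k \<le> f j \<Longrightarrow> 2 \<le> f j \<Longrightarrow> f (j + 1) = f j"
  shows "f j \<le> 1"
proof -
  have fin: "finite (f ` {0..<N})" "f ` {0..<N} \<noteq> {}" using n_ge_3 by auto
  obtain j0 where j0: "f j0 = Max (f ` {0..<N})" using Max_in[OF fin] by auto
  have max: "f k \<le> f j0" for k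
  proof -
    have "k mod N \<in> {0..<N}" using n_ge_3 by simp
    then show ?thesis using Max_ge[OF fin(1) imageI] per[of k] unfolding j0 by metis
  qed
  have "f j0 \<le> 1"
  proof (rule ccontr)
    assume "\<not> f j0 \<le> 1"
    then have const: "f (j0 + int i) = f j0" for i
    proof (induction i)
      case (Suc i)
      then have "f (j0 + int i + 1) = f (j0 + int i)" using flat max by simp
      then show ?case using Suc by (simp add: ac_simps)
    qed simp
    have "(\<Sum>i<n. f (j0 + int i)) = 0"
      using sum_periodic_shift[of f j0] per[of "_ + N"] per zero_sum by simp
    then show False using const n_ge_3 \<open>\<not> f j0 \<le> 1\<close> by simp
  qed
  then show ?thesis using max order_trans by blast
qed

lemma step_stable_imbalance_bounded:
  assumes X: "X \<subseteq> {..<n}" and stable: "step_stable X"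
  shows "\<bar>imbalance X j\<bar> \<le> 1"
proof -
  have "imbalance X j \<le> 1"
    by (rule periodic_zero_sum_le_1[where f="imbalance X"])
      (use imbalance_mod sum_imbalance imbalance_flat_at_max[OF X stable] in auto)
  moreover have "- imbalance X j \<le> 1"
    by (rule periodic_zero_sum_le_1[where f="\<lambda>j. - imbalance X j"])
      (use imbalance_mod sum_imbalance[of X] imbalance_flat_at_min[OF X stable] in
        \<open>auto simp: sum_negf\<close>)
  ultimately show ?thesis by simp
qed

end

section \<open>The upper bound and its attainment\<close>

definition square_minus_parity :: "int \<Rightarrow> int" where
  "square_minus_parity c = c * c - c mod 2"

lemma square_minus_parity_nonneg: "0 \<le> square_minus_parity c"
proof (cases "c = 0")
  case False
  then have "1 \<le> \<bar>c\<bar>" by simp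
  then have "1 \<le> \<bar>c\<bar> * \<bar>c\<bar>" using mult_mono[of 1 "\<bar>c\<bar>" 1 "\<bar>c\<bar>"] by simp
  then show ?thesis unfolding square_minus_parity_def abs_mult_self_eq by simp
qed (simp add: square_minus_parity_def)

lemma square_minus_parity_eq_0: "\<bar>c\<bar> \<le> 1 \<Longrightarrow> square_minus_parity c = 0"
  by (cases "c = -1 \<or> c = 0 \<or> c = 1") (auto simp: square_minus_parity_def)

context cycle_graph
begin

lemma sum_fun_occupied:
  assumes X: "X \<subseteq> {..<n}"
  shows "(\<Sum>i<n. F (occupied X (c + int i))) = (N - int (card X)) * F 0 + int (card X) * F 1"
proof -
  have "(\<Sum>i<n. F (occupied X (c + int i))) = (\<Sum>i<n. F 0 + occupied X (c + int i) * (F 1 - F 0))"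
  proof (rule sum.cong[OF refl])
    fix i
    show "F (occupied X (c + int i)) = F 0 + occupied X (c + int i) * (F 1 - F 0)"
      using occupied_cases[of X "c + int i"] by auto
  qed
  also have "\<dots> = N * F 0 + (\<Sum>i<n. occupied X (c + int i)) * (F 1 - F 0)"
    by (simp add: sum.distrib sum_distrib_right)
  also have "\<dots> = (N - int (card X)) * F 0 + int (card X) * F 1"
    unfolding sum_occupied[OF X] by (simp add: algebra_simps)
  finally show ?thesis .
qed

definition Wsum_bound :: "nat \<Rightarrow> int" where
  "Wsum_bound k = (N - int k) * square_minus_parity (int k)
                  + int k * square_minus_parity (int k - n_mod_2)
                  + 2 * n_mod_2 * (int k * int k - int k)"

text \<open>Write 4ab = (a + b)^2 - (a - b)^2 for the two arc counts a, b of each cut: a + b is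
  determined by |X| and the antipodal occupancy, and a + b and a - b have the same parity.\<close>
lemma eight_Wsum_eq:
  assumes X: "X \<subseteq> {..<n}"
  shows "8 * int (Wsum E X)
         = Wsum_bound (card X) - (\<Sum>i<n. square_minus_parity (imbalance X (int i)))"
proof -
  define a where "a i = arc_count X (int i)" for i
  define a' where "a' i = arc_count X (int i + half')" for i
  have b: "imbalance X (int i) = a i - a' i" for i unfolding imbalance_def a_def a'_def ..
  have s: "a i + a' i = int (card X) - n_mod_2 * occupied X (half + 1 + int i)" for i
    using arc_count_add_opposite[OF X, of "int i"] unfolding a_def a'_def by (simp add: ac_simps)
  have "(a i + a' i) mod 2 = (a i - a' i) mod 2" for i
  proof -
    have "a i + a' i = (a i - a' i) + a' i * 2" by simp
    then show ?thesis by (simp only: mod_mult_self1)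
  qed
  then have four: "4 * (a i * a' i) = square_minus_parity (a i + a' i) - square_minus_parity (a i - a' i)"
    for i unfolding square_minus_parity_def by (simp add: algebra_simps)
  have "(\<Sum>i<n. square_minus_parity (a i + a' i))
        = (N - int (card X)) * square_minus_parity (int (card X))
          + int (card X) * square_minus_parity (int (card X) - n_mod_2)"
    unfolding s using sum_fun_occupied[OF X, of "\<lambda>g. square_minus_parity (int (card X) - n_mod_2 * g)"]
    by simp
  moreover have "8 * int (Wsum E X) = (\<Sum>i<n. 4 * (a i * a' i))
                   + 2 * n_mod_2 * (int (card X) * int (card X) - int (card X))"
  proof -
    have "2 * n_mod_2 * (int (card X) * int (card X) - int (card X))
          = 4 * (n_mod_2 * int (card (ordered_pairs X)))"
      unfolding card_ordered_pairs_double[OF finite_below_n[OF X], symmetric] by simp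
    then show ?thesis
      using double_Wsum_eq_cuts[OF X] unfolding a_def a'_def sum_distrib_left[symmetric] by linarith
  qed
  ultimately show ?thesis unfolding four b Wsum_bound_def sum_subtractf by simp
qed

lemma locally_maximal_no_gain:
  assumes locmax: "\<not> (\<exists>Z\<in>perturbations (cycle_V n) E Y. Wsum E Z > Wsum E Y)"
    and "x \<in> Y" "x' < n" "x' \<notin> Y" "E x x'"
  shows "int (Wsum E ((Y - {x}) \<union> {x'})) - int (Wsum E Y) \<le> 0"
proof -
  have "(Y - {x}) \<union> {x'} \<in> perturbations (cycle_V n) E Y"
    unfolding perturbations_def cycle_V_def mem_Collect_eq
    by (rule exI[of _ x], rule exI[of _ x']) (use assms in auto)
  then show ?thesis using locmax by fastforce
qed

lemma step_stable_if_locally_maximal: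
  assumes Y: "Y \<subseteq> {..<n}"
    and locmax: "\<not> (\<exists>Z\<in>perturbations (cycle_V n) E Y. Wsum E Z > Wsum E Y)"
  shows "step_stable Y"
  unfolding step_stable_def
proof (intro conjI allI impI; elim conjE)
  fix j
  show "-1 \<le> imbalance Y j" if "occupied Y j = 1" "occupied Y (j + 1) = 0"
  proof -
    define x where "x = nat (j mod N)"
    have x_int: "int x = j mod N" and "x < n" unfolding x_def by (rule nat_mod_N)+
    have "int ((x + 1) mod n) = (j + 1) mod N"
      unfolding int_suc_mod x_int by (simp add: mod_add_left_eq)
    then have x: "x \<in> Y" "(x + 1) mod n \<notin> Y"
      using that occupied_eq_of_bool[OF x_int] occupied_eq_of_bool[of "(x + 1) mod n"] by auto
    have "int (Wsum E ((Y - {x}) \<union> {(x + 1) mod n})) - int (Wsum E Y) \<le> 0"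
      by (rule locally_maximal_no_gain[OF locmax x(1) _ x(2)])
        (use \<open>x < n\<close> n_ge_3 in \<open>auto simp: cycle_E_def\<close>)
    then have "-1 \<le> imbalance Y (int x)" using Wsum_forward_move[OF Y x] by linarith
    then show ?thesis using imbalance_mod[of Y j] unfolding x_int by simp
  qed
  show "imbalance Y j \<le> 1" if "occupied Y j = 0" "occupied Y (j + 1) = 1"
  proof -
    define x where "x = nat ((j + 1) mod N)"
    have x_int: "int x = (j + 1) mod N" and "x < n" unfolding x_def by (rule nat_mod_N)+
    have "int ((x + n - 1) mod n) = j mod N"
      unfolding int_pred_mod[OF \<open>x < n\<close>] x_int by (simp add: mod_diff_left_eq)
    then have x: "x \<in> Y" "(x + n - 1) mod n \<notin> Y"
      using that occupied_eq_of_bool[OF x_int] occupied_eq_of_bool[of "(x + n - 1) mod n"] by auto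
    have "int (Wsum E ((Y - {x}) \<union> {(x + n - 1) mod n})) - int (Wsum E Y) \<le> 0"
      by (rule locally_maximal_no_gain[OF locmax x(1) _ x(2)])
        (use \<open>x < n\<close> suc_pred_mod[of x] n_ge_3 in \<open>auto simp: cycle_E_def\<close>)
    then have "imbalance Y (int x - 1) \<le> 1" using Wsum_backward_move[OF Y x] by linarith
    moreover have "imbalance Y (int x - 1) = imbalance Y j"
      using imbalance_mod[of Y "int x - 1"] imbalance_mod[of Y j] unfolding x_int
      by (simp add: mod_diff_left_eq)
    ultimately show ?thesis by simp
  qed
qed

lemma locally_maximal_is_maximizer:
  assumes Y: "Y \<subseteq> cycle_V n"
    and locmax: "\<not> (\<exists>Z\<in>perturbations (cycle_V n) E Y. Wsum E Z > Wsum E Y)"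
  shows "is_maximizer (cycle_V n) (Wsum E) Y"
proof -
  have Y': "Y \<subseteq> {..<n}" using Y by (auto simp: cycle_V_def)
  have "square_minus_parity (imbalance Y (int i)) = 0" for i
    using square_minus_parity_eq_0 step_stable_imbalance_bounded[OF Y']
      step_stable_if_locally_maximal[OF Y' locmax] by blast
  then have Y_bound: "8 * int (Wsum E Y) = Wsum_bound (card Y)"
    using eight_Wsum_eq[OF Y'] by simp
  have "Wsum E B \<le> Wsum E Y" if "B \<subseteq> cycle_V n" "card B = card Y" for B
  proof -
    have "0 \<le> (\<Sum>i<n. square_minus_parity (imbalance B (int i)))"
      by (intro sum_nonneg square_minus_parity_nonneg)
    moreover have "B \<subseteq> {..<n}" using that by (auto simp: cycle_V_def)
    ultimately show ?thesis using eight_Wsum_eq[of B] Y_bound unfolding that(2) by linarith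
  qed
  then show ?thesis using Y unfolding is_maximizer_def by blast
qed

end

section \<open>Ascending local search\<close>

lemma perturbation_subset_card:
  assumes "Z \<in> perturbations V E X" "X \<subseteq> V" "finite V"
  shows "Z \<subseteq> V \<and> card Z = card X"
proof -
  obtain u v where Z: "Z = (X - {u}) \<union> {v}" "u \<in> X" "v \<in> V - X"
    using assms(1) unfolding perturbations_def by blast
  have "finite X" using assms(2,3) finite_subset by blast
  with Z have "card X > 0" by (auto simp: card_gt_0_iff)
  with Z \<open>finite X\<close> have "card Z = card X" by (simp add: card_Diff_singleton)
  with Z assms(2) show ?thesis by auto
qed

lemma als_result_locally_maximal:
  assumes "als V E F A Y" "A \<subseteq> V" "finite V"
  shows "Y \<subseteq> V \<and> card Y = card A \<and> \<not> (\<exists>Z\<in>perturbations V E Y. F Z > F Y)"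
  using assms
proof (induction rule: als.induct)
  case (als_stop X)
  then show ?case by blast
next
  case (als_step L X j Z)
  have "j < length L"
    using LeastI_ex[of "\<lambda>i. i < length L \<and> F X < F (L ! i)"] als_step.hyps(3,4) by blast
  then have "L ! j \<in> perturbations V E X" using als_step.hyps(2) nth_mem by blast
  then have "L ! j \<subseteq> V \<and> card (L ! j) = card X"
    using perturbation_subset_card als_step.prems by blast
  then show ?case using als_step.IH als_step.prems by auto
qed

text \<open>Each step strictly increases F, so the number of subsets of the finite V with a larger
  F-value strictly decreases.\<close>
lemma als_exists:
  assumes "finite V" "A \<subseteq> V"
  shows "\<exists>Y. als V E F A Y"
  using assms(2)
proof (induction "card {B. B \<subseteq> V \<and> F A < F B}" arbitrary: A rule: less_induct)
  case less
  show ?case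
  proof (cases "\<exists>Z\<in>perturbations V E A. F Z > F A")
    case False
    then show ?thesis using als_stop by blast
  next
    case True
    have "perturbations V E A \<subseteq> Pow V" unfolding perturbations_def using less.prems by auto
    then have "finite (perturbations V E A)" using assms(1) finite_subset by blast
    then obtain L where L: "distinct L" "set L = perturbations V E A"
      using finite_distinct_list by blast
    have improving: "\<exists>i < length L. F (L ! i) > F A"
      using True L(2) by (metis in_set_conv_nth)
    define j where "j = (LEAST i. i < length L \<and> F (L ! i) > F A)"
    have j: "j < length L" "F (L ! j) > F A"
      using LeastI_ex[OF improving] unfolding j_def by auto
    have sub: "L ! j \<subseteq> V"
      using perturbation_subset_card[of "L ! j"] j(1) L(2) nth_mem less.prems assms(1) by blast
    have "{B. B \<subseteq> V \<and> F (L ! j) < F B} \<subset> {B. B \<subseteq> V \<and> F A < F B}"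
      using j sub by auto
    moreover have "finite {B. B \<subseteq> V \<and> F A < F B}"
      using assms(1) by (auto intro: finite_subset[of _ "Pow V"])
    ultimately have "card {B. B \<subseteq> V \<and> F (L ! j) < F B} < card {B. B \<subseteq> V \<and> F A < F B}"
      by (rule psubset_card_mono[rotated])
    then obtain Y where "als V E F (L ! j) Y" using less.hyps sub by blast
    then show ?thesis using als_step[OF L improving j_def] by blast
  qed
qed

theorem mainTheorem14:
  fixes n :: nat and A :: "nat set"
  assumes "n \<ge> 3" and "A \<subseteq> cycle_V n" and "2 \<le> card A" and "card A \<le> n"
  shows "(\<exists>Y. als (cycle_V n) (cycle_E n) (Wsum (cycle_E n)) A Y) \<and>
         (\<forall>Y. als (cycle_V n) (cycle_E n) (Wsum (cycle_E n)) A Y \<longrightarrow>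
              is_maximizer (cycle_V n) (Wsum (cycle_E n)) Y)"
proof -
  interpret cycle_graph n using assms(1) by unfold_locales
  have fin: "finite (cycle_V n)" by (simp add: cycle_V_def)
  have "is_maximizer (cycle_V n) (Wsum E) Y" if "als (cycle_V n) E (Wsum E) A Y" for Y
    using als_result_locally_maximal[OF that assms(2) fin] by (blast intro: locally_maximal_is_maximizer)
  then show ?thesis using als_exists[OF fin assms(2)] by blast
qed

end
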